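(* Assume the setting in the context, and in addition $\phi_\alpha=\phi_\beta$. Suppose $A:=\phi_\alpha-\gamma\phi'_\alpha$ and $B:=\phi_\beta-\gamma\phi'_\beta$ have opposite signs, so that both $\theta_{\pi_1}$ and $\theta_{\pi_2}$ exist and are distinct, and let $\Omega=\{\lambda\theta_{\pi_1}+(1-\lambda)\theta_{\pi_2}:\lambda\in(0,1)\}$ be the open segment between them. Write $d=\theta_{\pi_1}-\theta_{\pi_2}$ and, for nonzero $x,y\in\mathbb{R}^2$, $\cos(x,y)=\langle x,y\rangle/(\|x\|\|y\|)$. (1) If $A>0$ and $B<0$, then $\cos\big(d,F^{\pi_2}_{\mathrm{semi}}(\theta)\big)=1$ for every $\theta\in\Omega$ with $\theta_2\ge\theta_1$, and $\cos\big(d,F^{\pi_1}_{\mathrm{semi}}(\theta)\big)=1$ for every $\theta\in\Omega$ with $\theta_2\le\theta_1$. (2) If $A<0$ and $B>0$, then $\cos\big(d,F^{\pi_2}_{\mathrm{semi}}(\theta)\big)=-1$ for every $\theta\in\Omega$ with $\theta_2\ge\theta_1$, and $\cos\big(d,F^{\pi_1}_{\mathrm{semi}}(\theta)\big)=-1$ for every $\theta\in\Omega$ with $\theta_2\le\theta_1$. (In particular the relevant semi-gradient fields are nonzero on these sets, and along the segment they point toward $\theta_{\pi_1}$ in case (1) and toward $\theta_{\pi_2}$ in case (2).)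
   Context: Let $\gamma\in(0,1)$, $C<0$, $\phi_\alpha,\phi_\beta>0$, $\phi'_\alpha,\phi'_\beta\ge0$ with $\phi_\alpha-\gamma\phi'_\alpha\ne0$ and $\phi_\beta-\gamma\phi'_\beta\ne0$. These are the scalar embeddings $\phi(s_\alpha),\phi(s_\beta),\phi(s'_\alpha),\phi(s'_\beta)$ of the states in a two-sample dataset $\{(s_\alpha,a_1,s'_\alpha,C),(s_\beta,a_2,s'_\beta,C)\}$ from an MDP with actions $\{a_1,a_2\}$ and discount $\gamma$, with linear parameterization $Q(s,a)=\phi(s)\theta(a)$, $\theta=(\theta_1,\theta_2)=(\theta(a_1),\theta(a_2))\in\mathbb{R}^2$. Policy $\pi_1$ corresponds to the region $\theta_1\ge\theta_2$ and $\pi_2$ to $\theta_1\le\theta_2$. Negative semi-gradients: $F^{\pi_1}_{\mathrm{semi}}(\theta)=\big(-\phi_\alpha(\phi_\alpha\theta_1-C-\gamma\phi'_\alpha\theta_1),\ -\phi_\beta(\phi_\beta\theta_2-C-\gamma\phi'_\beta\theta_1)\big)$, $F^{\pi_2}_{\mathrm{semi}}(\theta)=\big(-\phi_\alpha(\phi_\alpha\theta_1-C-\gamma\phi'_\alpha\theta_2),\ -\phi_\beta(\phi_\beta\theta_2-C-\gamma\phi'_\beta\theta_2)\big)$. Solutions of the Bellman equations: with $A=\phi_\alpha-\gamma\phi'_\alpha$, $B=\phi_\beta-\gamma\phi'_\beta$, $\theta_{\pi_1}=\Big(\frac{C}{A},\ \frac{C}{\phi_\beta}+\frac{C\gamma\phi'_\beta}{\phi_\beta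 A}\Big)$ (the zero of $F^{\pi_1}_{\mathrm{semi}}$, lying in $\{\theta_1\ge\theta_2\}$ iff $B/A\le1$) and $\theta_{\pi_2}=\Big(\frac{C}{\phi_\alpha}+\frac{C\gamma\phi'_\alpha}{\phi_\alpha B},\ \frac{C}{B}\Big)$ (the zero of $F^{\pi_2}_{\mathrm{semi}}$, lying in $\{\theta_1\le\theta_2\}$ iff $A/B\le1$). *)

theory Defs
  imports "HOL-Analysis.Analysis"
begin

text \<open>Parameters theta = (theta1, theta2) :: real \<times> real, pa = phi_alpha, pb = phi_beta,
  pa' = phi'_alpha, pb' = phi'_beta, g = gamma, C = reward.\<close>

definition F_semi_pi1 :: "real \<Rightarrow> real \<Rightarrow> real \<Rightarrow> real \<Rightarrow> real \<Rightarrow> real \<Rightarrow> real \<times> real \<Rightarrow> real \<times> real" where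
  "F_semi_pi1 g C pa pb pa' pb' \<theta> =
     (- pa * (pa * fst \<theta> - C - g * pa' * fst \<theta>),
      - pb * (pb * snd \<theta> - C - g * pb' * fst \<theta>))"

definition F_semi_pi2 :: "real \<Rightarrow> real \<Rightarrow> real \<Rightarrow> real \<Rightarrow> real \<Rightarrow> real \<Rightarrow> real \<times> real \<Rightarrow> real \<times> real" where
  "F_semi_pi2 g C pa pb pa' pb' \<theta> =
     (- pa * (pa * fst \<theta> - C - g * pa' * snd \<theta>),
      - pb * (pb * snd \<theta> - C - g * pb' * snd \<theta>))"

definition theta_pi1 :: "real \<Rightarrow> real \<Rightarrow> real \<Rightarrow> real \<Rightarrow> real \<Rightarrow> real \<Rightarrow> real \<times> real" where
  "theta_pi1 g C pa pb pa' pb' =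
     (let A = pa - g * pa' in (C / A, C / pb + C * g * pb' / (pb * A)))"

definition theta_pi2 :: "real \<Rightarrow> real \<Rightarrow> real \<Rightarrow> real \<Rightarrow> real \<Rightarrow> real \<Rightarrow> real \<times> real" where
  "theta_pi2 g C pa pb pa' pb' =
     (let B = pb - g * pb' in (C / pa + C * g * pa' / (pa * B), C / B))"

definition cosine :: "real \<times> real \<Rightarrow> real \<times> real \<Rightarrow> real" where
  "cosine x y = inner x y / (norm x * norm y)"

end

theory Submission
  imports Defs
begin

text \<open>Both semi-gradient fields are affine, vanishing at the respective Bellman solutions.
  When \<open>\<phi>\<^sub>\<alpha> = \<phi>\<^sub>\<beta> = p\<close>, the difference \<open>d\<close> of the two solutions is a multiple of
  \<open>(\<phi>'\<^sub>\<alpha>, \<phi>'\<^sub>\<beta>)\<close>, and this vector is an eigenvector of both linear parts, with eigenvalues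
  \<open>-p A\<close> and \<open>-p B\<close>. Since the open segment is \<open>\<theta>\<^sub>\<pi>\<^sub>2 + \<lambda> d = \<theta>\<^sub>\<pi>\<^sub>1 - (1 - \<lambda>) d\<close>, both fields are
  multiples of \<open>d\<close> there, with coefficients \<open>-\<lambda> p B\<close> and \<open>(1 - \<lambda>) p A\<close>, whose signs
  give the cosines.\<close>

lemma F_semi_pi1_add:
  "F_semi_pi1 g C pa pb pa' pb' (\<theta> + v) =
     F_semi_pi1 g C pa pb pa' pb' \<theta> + (- pa * (pa - g * pa') * fst v, - pb * (pb * snd v - g * pb' * fst v))"
  by (simp add: F_semi_pi1_def algebra_simps)

lemma F_semi_pi2_add:
  "F_semi_pi2 g C pa pb pa' pb' (\<theta> + v) =
     F_semi_pi2 g C pa pb pa' pb' \<theta> + (- pa * (pa * fst v - g * pa' * snd v), - pb * (pb - g * pb') * snd v)"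
  by (simp add: F_semi_pi2_def algebra_simps)

lemma F_semi_pi1_theta_pi1:
  assumes "pb \<noteq> 0" "pa - g * pa' \<noteq> 0"
  shows "F_semi_pi1 g C pa pb pa' pb' (theta_pi1 g C pa pb pa' pb') = 0"
  using assms by (simp add: F_semi_pi1_def theta_pi1_def field_simps zero_prod_def)

lemma F_semi_pi2_theta_pi2:
  assumes "pa \<noteq> 0" "pb - g * pb' \<noteq> 0"
  shows "F_semi_pi2 g C pa pb pa' pb' (theta_pi2 g C pa pb pa' pb') = 0"
  using assms by (simp add: F_semi_pi2_def theta_pi2_def field_simps zero_prod_def)

lemma theta_pi1_minus_theta_pi2:
  assumes "p \<noteq> 0" "p - g * a \<noteq> 0" "p - g * b \<noteq> 0"
  shows "theta_pi1 g C p p a b - theta_pi2 g C p p a b =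
           (C * g\<^sup>2 * (a - b) / (p * (p - g * a) * (p - g * b))) *\<^sub>R (a, b)"
  using assms by (simp add: theta_pi1_def theta_pi2_def field_simps power2_eq_square)

lemma theta_pi1_neq_theta_pi2:
  assumes "p \<noteq> 0" "p - g * a \<noteq> 0" "p - g * b \<noteq> 0" "g \<noteq> 0" "C \<noteq> 0" "a \<noteq> b"
  shows "theta_pi1 g C p p a b - theta_pi2 g C p p a b \<noteq> 0"
proof -
  have "C * g\<^sup>2 * (a - b) / (p * (p - g * a) * (p - g * b)) \<noteq> 0"
    using assms by simp
  moreover have "(a, b) \<noteq> 0"
    using assms(6) by (auto simp: zero_prod_def)
  ultimately show ?thesis
    unfolding theta_pi1_minus_theta_pi2[OF assms(1-3)] scaleR_eq_0_iff by blast
qed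

lemma F_semi_pi2_on_segment:
  fixes g C p a b l :: real
  assumes "p \<noteq> 0" "p - g * a \<noteq> 0" "p - g * b \<noteq> 0"
  defines "t1 \<equiv> theta_pi1 g C p p a b" and "t2 \<equiv> theta_pi2 g C p p a b"
  shows "F_semi_pi2 g C p p a b (l *\<^sub>R t1 + (1 - l) *\<^sub>R t2) = (l * p * (g * b - p)) *\<^sub>R (t1 - t2)"
proof -
  obtain c where d: "t1 - t2 = c *\<^sub>R (a, b)"
    using theta_pi1_minus_theta_pi2[OF assms(1-3)] unfolding t1_def t2_def by blast
  then have "l *\<^sub>R t1 + (1 - l) *\<^sub>R t2 = t2 + (l * c) *\<^sub>R (a, b)"
    by (simp add: algebra_simps flip: d)
  then have "F_semi_pi2 g C p p a b (l *\<^sub>R t1 + (1 - l) *\<^sub>R t2) =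
      (- p * (p * (l * c * a) - g * a * (l * c * b)), - p * (p - g * b) * (l * c * b))"
    using F_semi_pi2_theta_pi2 assms(1,3) by (simp add: F_semi_pi2_add t2_def)
  also have "\<dots> = (l * p * (g * b - p)) *\<^sub>R (c *\<^sub>R (a, b))"
    by (simp add: algebra_simps)
  finally show ?thesis
    by (simp only: d)
qed

lemma F_semi_pi1_on_segment:
  fixes g C p a b l :: real
  assumes "p \<noteq> 0" "p - g * a \<noteq> 0" "p - g * b \<noteq> 0"
  defines "t1 \<equiv> theta_pi1 g C p p a b" and "t2 \<equiv> theta_pi2 g C p p a b"
  shows "F_semi_pi1 g C p p a b (l *\<^sub>R t1 + (1 - l) *\<^sub>R t2) = ((1 - l) * p * (p - g * a)) *\<^sub>R (t1 - t2)"
proof -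
  obtain c where d: "t1 - t2 = c *\<^sub>R (a, b)"
    using theta_pi1_minus_theta_pi2[OF assms(1-3)] unfolding t1_def t2_def by blast
  then have "l *\<^sub>R t1 + (1 - l) *\<^sub>R t2 = t1 + (- (1 - l) * c) *\<^sub>R (a, b)"
    by (simp add: algebra_simps flip: d)
  then have "F_semi_pi1 g C p p a b (l *\<^sub>R t1 + (1 - l) *\<^sub>R t2) =
      (- p * (p - g * a) * (- (1 - l) * c * a), - p * (p * (- (1 - l) * c * b) - g * b * (- (1 - l) * c * a)))"
    using F_semi_pi1_theta_pi1 assms(1,2) by (simp add: F_semi_pi1_add t1_def)
  also have "\<dots> = ((1 - l) * p * (p - g * a)) *\<^sub>R (c *\<^sub>R (a, b))"
    by (simp add: algebra_simps)
  finally show ?thesis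
    by (simp only: d)
qed

lemma cosine_scaleR_right:
  assumes "d \<noteq> 0"
  shows "cosine d (c *\<^sub>R d) = sgn c"
proof -
  have "cosine d (c *\<^sub>R d) = c * (norm d)\<^sup>2 / (\<bar>c\<bar> * (norm d)\<^sup>2)"
    by (simp add: cosine_def dot_square_norm power2_eq_square mult.assoc mult.left_commute)
  also have "\<dots> = sgn c"
    using assms by (simp add: sgn_real_def)
  finally show ?thesis .
qed

theorem theorem1:
  fixes g C pa pb pa' pb' :: real
  assumes "0 < g" "g < 1" "C < 0"
    and "pa > 0" "pb > 0" "pa' \<ge> 0" "pb' \<ge> 0"
    and "pa - g * pa' \<noteq> 0" "pb - g * pb' \<noteq> 0"
    and "pa = pb"
    and "(pa - g * pa') * (pb - g * pb') < 0"
  defines "\<Omega> \<equiv> {l *\<^sub>R theta_pi1 g C pa pb pa' pb' + (1 - l) *\<^sub>R theta_pi2 g C pa pb pa' pb' | l. 0 < l \<and> l < 1}"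
    and "d \<equiv> theta_pi1 g C pa pb pa' pb' - theta_pi2 g C pa pb pa' pb'"
  shows
    "(pa - g * pa' > 0 \<and> pb - g * pb' < 0 \<longrightarrow>
       (\<forall>\<theta>\<in>\<Omega>. snd \<theta> \<ge> fst \<theta> \<longrightarrow>
          d \<noteq> 0 \<and> F_semi_pi2 g C pa pb pa' pb' \<theta> \<noteq> 0 \<and>
          cosine d (F_semi_pi2 g C pa pb pa' pb' \<theta>) = 1) \<and>
       (\<forall>\<theta>\<in>\<Omega>. snd \<theta> \<le> fst \<theta> \<longrightarrow>
          d \<noteq> 0 \<and> F_semi_pi1 g C pa pb pa' pb' \<theta> \<noteq> 0 \<and>
          cosine d (F_semi_pi1 g C pa pb pa' pb' \<theta>) = 1))
   \<and> (pa - g * pa' < 0 \<and> pb - g * pb' > 0 \<longrightarrow>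
       (\<forall>\<theta>\<in>\<Omega>. snd \<theta> \<ge> fst \<theta> \<longrightarrow>
          d \<noteq> 0 \<and> F_semi_pi2 g C pa pb pa' pb' \<theta> \<noteq> 0 \<and>
          cosine d (F_semi_pi2 g C pa pb pa' pb' \<theta>) = -1) \<and>
       (\<forall>\<theta>\<in>\<Omega>. snd \<theta> \<le> fst \<theta> \<longrightarrow>
          d \<noteq> 0 \<and> F_semi_pi1 g C pa pb pa' pb' \<theta> \<noteq> 0 \<and>
          cosine d (F_semi_pi1 g C pa pb pa' pb' \<theta>) = -1))"
proof -
  let ?F1 = "F_semi_pi1 g C pa pb pa' pb'" and ?F2 = "F_semi_pi2 g C pa pb pa' pb'"
  have "pa' \<noteq> pb'"
    using assms(10,11) by auto
  then have "d \<noteq> 0"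
    unfolding d_def using theta_pi1_neq_theta_pi2 assms(1,3,4,8-10) by simp
  have fields: "\<exists>l. 0 < l \<and> l < 1 \<and> ?F2 \<theta> = (l * pa * (g * pb' - pb)) *\<^sub>R d
                  \<and> ?F1 \<theta> = ((1 - l) * pa * (pa - g * pa')) *\<^sub>R d" if "\<theta> \<in> \<Omega>" for \<theta>
    using that F_semi_pi1_on_segment F_semi_pi2_on_segment assms(4,8-10)
    unfolding \<Omega>_def d_def by fastforce
  show ?thesis
    using \<open>d \<noteq> 0\<close> assms(4)
    by (auto dest!: fields simp: cosine_scaleR_right mult_less_0_iff)
qed

end
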